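(* The map $\bar f=h\circ f\circ g$ defined below is a bijection from $\mathcal{G}_3$ onto $\mathcal{A}_3$, and for each $\pi\in\mathcal G_3$, $\bar f(\pi)$ is a partition of the same integer as $\pi$.
   Context: Partitions are nonincreasing finite sequences of positive integers; $m_j(\pi)$ is the multiplicity of $j$, $\ell(\pi)$ the number of parts, $\cup$ the multiset union of parts, $\langle a^m\rangle$ the partition of $m$ copies of $a$. $\mathcal{G}_3$: partitions $\pi$ with $m_1(\pi)\le 2$ and $m_j(\pi)+m_{j+1}(\pi)\le2$ for all $j\ge1$. $\mathcal{G}_1$: partitions with $m_1(\pi)=0$ and $m_j(\pi)+m_{j+1}(\pi)\le2$ for all $j\ge 1$. The map $g$ adds $1$ to every part of $\pi\in\mathcal G_3$ (giving an element of $\mathcal G_1$). For $\pi\in\mathcal{G}_1$: let $D(\pi)$ be the number of distinct parts of multiplicity $2$, $R_1(\pi)>\dots>R_{D(\pi)}(\pi)$ these parts, $R_{D(\pi)+1}(\pi)=0$, $R_0(\pi)=\infty$, and $\pi^{(k)}$ ($0\le k\le D(\pi)$) the partition of parts of $\pi$ strictly between $R_{k+1}(\pi)$ and $R_k(\pi)$. Then $$f(\pi)=\bigcup_{i=1}^{D(\pi)}\big\langle (2i)^{R_i(\pi)-R_{i+1}(\pi)-\ell(\pi^{(i)})}\big\rangle\ \cup\ \bigcup_{i=0}^{D(\pi)}\Big(\pi^{(i)}\text{ with }2i\text{ added to each part}\Big).$$ $\mathcal{A}_1$: partitions $\lambda$ with $m_j(\lambda)\le1$ for odd $j$, $m_j(\lambda)=0$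 for odd $j<R_1(\lambda)+2$, $m_j(\lambda)\ge2$ for even $j$ with $0<j<R_1(\lambda)$, where $R_1(\lambda)$ is the largest repeated part of $\lambda$ (or $0$). For $\lambda\in\mathcal A_1$, let $P(\lambda)$ be the subpartition of parts greater than $R_1(\lambda)$; $h(\lambda)$ is obtained from $\lambda$ by subtracting $1$ from each part of $P(\lambda)$ and, for each even $2i$ with $2\le 2i\le R_1(\lambda)$, replacing two copies of $2i$ by two copies of $2i-1$. $\mathcal{A}_3$: partitions $\lambda$ for which there exists an integer $j\ge0$ such that $m_{2i-1}(\lambda)=2$ for all $1\le i\le j$ and every part of $\lambda$ greater than $2j$ has multiplicity at most $1$ (even parts $\le 2j$ may occur with any multiplicity). *)

theory Defs
  imports Main "HOL-Library.Multiset"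
begin

text \<open>Partitions are represented as finite multisets of positive naturals:
  m_j = count p j, number of parts = size p, the partitioned integer = sum_mset p.\<close>

definition is_partition :: "nat multiset \<Rightarrow> bool" where
  "is_partition p \<longleftrightarrow> 0 \<notin># p"

definition G3 :: "nat multiset set" where
  "G3 = {p. is_partition p \<and> count p 1 \<le> 2 \<and>
            (\<forall>j\<ge>1. count p j + count p (Suc j) \<le> 2)}"

definition G1 :: "nat multiset set" where
  "G1 = {p. is_partition p \<and> count p 1 = 0 \<and>
            (\<forall>j\<ge>1. count p j + count p (Suc j) \<le> 2)}"

definition g_map :: "nat multiset \<Rightarrow> nat multiset" where
  "g_map p = image_mset Suc p"

definition twoparts :: "nat multiset \<Rightarrow> nat list" where
  "twoparts p = rev (sorted_list_of_set {j. count p j = 2})"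

definition Dnum :: "nat multiset \<Rightarrow> nat" where
  "Dnum p = length (twoparts p)"

text \<open>R_i for 1 \<le> i \<le> D; R_{D+1} = 0 (R_0 = \<infinity> is handled in piece).\<close>
definition Rpart :: "nat multiset \<Rightarrow> nat \<Rightarrow> nat" where
  "Rpart p i = (if 1 \<le> i \<and> i \<le> Dnum p then twoparts p ! (i - 1) else 0)"

definition piece :: "nat multiset \<Rightarrow> nat \<Rightarrow> nat multiset" where
  "piece p k = filter_mset (\<lambda>x. Rpart p (Suc k) < x \<and> (k = 0 \<or> x < Rpart p k)) p"

definition f_map :: "nat multiset \<Rightarrow> nat multiset" where
  "f_map p =
     (\<Sum>i\<in>{1..Dnum p}. replicate_mset (Rpart p i - Rpart p (Suc i) - size (piece p i)) (2 * i))
   + (\<Sum>i\<in>{0..Dnum p}. image_mset (\<lambda>x. x + 2 * i) (piece p i))"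

definition R1 :: "nat multiset \<Rightarrow> nat" where
  "R1 l = (if {j. 2 \<le> count l j} = {} then 0 else Max {j. 2 \<le> count l j})"

definition A1 :: "nat multiset set" where
  "A1 = {l. is_partition l \<and>
            (\<forall>j. odd j \<longrightarrow> count l j \<le> 1) \<and>
            (\<forall>j. odd j \<and> j < R1 l + 2 \<longrightarrow> count l j = 0) \<and>
            (\<forall>j. even j \<and> 0 < j \<and> j < R1 l \<longrightarrow> 2 \<le> count l j)}"

definition h_map :: "nat multiset \<Rightarrow> nat multiset" where
  "h_map l =
     image_mset (\<lambda>x. x - 1) (filter_mset (\<lambda>x. R1 l < x) l)
   + (filter_mset (\<lambda>x. x \<le> R1 l) l - (\<Sum>i\<in>{1..R1 l div 2}. replicate_mset 2 (2 * i)))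
   + (\<Sum>i\<in>{1..R1 l div 2}. replicate_mset 2 (2 * i - 1))"

definition A3 :: "nat multiset set" where
  "A3 = {l. is_partition l \<and>
            (\<exists>j::nat. (\<forall>i. 1 \<le> i \<and> i \<le> j \<longrightarrow> count l (2 * i - 1) = 2) \<and>
                      (\<forall>x. 2 * j < x \<longrightarrow> count l x \<le> 1))}"

definition fbar :: "nat multiset \<Rightarrow> nat multiset" where
  "fbar = h_map \<circ> f_map \<circ> g_map"

end

theory Submission
  imports Defs
begin

text \<open>
  Adding 1 to every part identifies G3 with G1 and raises the sum by the number of parts.
  Every nonempty q in G1 is obtained from a smaller element of G1 by exactly one of three
  operations grow0, grow1, grow2 (shift all parts up, possibly adding one or two parts 2),
  distinguished by the multiplicity of 2 in q.  Following f along these operations shows by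
  induction that f(q) consists of blocks (2i)^(a_i), i = 1..D, with every a_i \<ge> 2, together
  with distinct parts P that all exceed 2D + 1, that f preserves the sum, and that
  |q| = |P| + 2D.  On such a multiset h lowers the parts of P by one and turns two copies of
  each 2i into two copies of 2i - 1, which produces exactly the elements of A3 and lowers the
  sum by |q|.  The data (D, a, P) can be read back from the result, and by the same induction
  they determine q and every admissible choice of them is realised.
\<close>

section \<open>Shifting multisets of naturals\<close>

lemma count_image_mset_inj: "inj f \<Longrightarrow> count (image_mset f M) (f x) = count M x"
  by (induction M) (auto simp: inj_def)

lemma count_image_mset_add:
  "count (image_mset (\<lambda>x. x + k) M) x = (if x < k then 0 else count M (x - k))" for M :: "nat multiset"
proof (cases "x < k")
  case True
  then have "x \<notin># image_mset (\<lambda>x. x + k) M" by auto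
  with True show ?thesis by (simp add: count_eq_zero_iff)
next
  case False
  then have "count (image_mset (\<lambda>x. x + k) M) (x - k + k) = count M (x - k)"
    by (intro count_image_mset_inj) (simp add: inj_def)
  with False show ?thesis by simp
qed

lemma count_image_mset_Suc:
  "count (image_mset Suc M) x = (if x = 0 then 0 else count M (x - 1))" for M :: "nat multiset"
  by (cases x) (simp_all add: count_eq_zero_iff count_image_mset_inj)

lemma image_mset_add_diff_cancel:
  "\<forall>x\<in>#M. k \<le> x \<Longrightarrow> image_mset (\<lambda>x. x + k) (image_mset (\<lambda>x. x - k) M) = M" for M :: "nat multiset"
  by (induction M) auto

lemma count_image_mset_diff:
  fixes M :: "nat multiset"
  assumes "\<forall>x\<in>#M. k \<le> x"
  shows "count (image_mset (\<lambda>x. x - k) M) j = count M (j + k)"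
  using count_image_mset_add[of k "image_mset (\<lambda>x. x - k) M" "j + k"]
  by (simp add: image_mset_add_diff_cancel[OF assms])

lemma obtain_image_mset_add:
  fixes M :: "nat multiset"
  assumes "\<forall>x\<in>#M. k \<le> x"
  obtains M' where "M = image_mset (\<lambda>x. x + k) M'" "\<And>j. count M' j = count M (j + k)"
  using that image_mset_add_diff_cancel[OF assms] count_image_mset_diff[OF assms] by metis

lemma sum_mset_image_add: "sum_mset (image_mset (\<lambda>x. x + k) M) = sum_mset M + k * size M"
  for M :: "nat multiset"
  by (induction M) auto

lemma sum_mset_image_Suc: "sum_mset (image_mset Suc M) = sum_mset M + size M"
  by (induction M) auto

lemma sum_mset_sum: "sum_mset (sum F A) = (\<Sum>i\<in>A. sum_mset (F i))"
  by (induction A rule: infinite_finite_induct) auto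

lemma image_mset_sum: "image_mset f (sum F A) = (\<Sum>i\<in>A. image_mset f (F i))"
  by (induction A rule: infinite_finite_induct) auto

lemma sorted_list_of_set_image_strict_mono:
  fixes f :: "nat \<Rightarrow> nat"
  assumes "finite A" "strict_mono f"
  shows "sorted_list_of_set (f ` A) = map f (sorted_list_of_set A)"
proof -
  have "sorted_wrt (<) (map f (sorted_list_of_set A))"
    using strict_sorted_list_of_set[of A] assms
    by (auto simp: sorted_wrt_map strict_mono_less elim!: sorted_wrt_mono_rel[rotated])
  then show ?thesis using assms
    by (intro strict_sorted_equal) (simp_all add: strict_sorted_list_of_set)
qed

lemma sorted_list_of_set_insert_min:
  fixes a :: nat
  assumes "finite B" "\<forall>b\<in>B. a < b"
  shows "sorted_list_of_set (insert a B) = a # sorted_list_of_set B"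
  using assms strict_sorted_list_of_set[of B]
  by (intro sorted_list_of_set_unique[THEN iffD1]) auto

section \<open>Growing elements of G1\<close>

text \<open>Every nonempty element of G1 arises from a smaller one by exactly one of the
  following operations, namely by grow\<open>k\<close> where \<open>k\<close> is the multiplicity of 2.\<close>
definition grow0 :: "nat multiset \<Rightarrow> nat multiset" where
  "grow0 q = image_mset Suc q"

definition grow1 :: "nat multiset \<Rightarrow> nat multiset" where
  "grow1 q = add_mset 2 (image_mset Suc q)"

definition grow2 :: "nat multiset \<Rightarrow> nat multiset" where
  "grow2 q = add_mset 2 (add_mset 2 (image_mset (\<lambda>x. x + 2) q))"

lemma count_grow0: "count (grow0 q) x = (if x = 0 then 0 else count q (x - 1))"
  by (simp add: grow0_def count_image_mset_Suc)

lemma count_grow1: "count (grow1 q) x = (if x = 2 then 1 else 0) + (if x = 0 then 0 else count q (x - 1))"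
  by (simp add: grow1_def count_image_mset_Suc)

lemma count_grow2: "count (grow2 q) x = (if x = 2 then 2 else 0) + (if x < 2 then 0 else count q (x - 2))"
  by (simp only: grow2_def count_add_mset count_image_mset_add) simp

definition doubled_parts :: "nat multiset \<Rightarrow> nat set" where
  "doubled_parts q = {j. count q j = 2}"

lemma finite_doubled_parts: "finite (doubled_parts q)"
  by (rule finite_subset[of _ "set_mset q"]) (auto simp: doubled_parts_def simp flip: count_greater_zero_iff)

lemma twoparts_eq: "twoparts q = rev (sorted_list_of_set (doubled_parts q))"
  by (simp add: twoparts_def doubled_parts_def)

lemma twoparts_grow0: "twoparts (grow0 q) = map Suc (twoparts q)"
proof -
  have "doubled_parts (grow0 q) = Suc ` doubled_parts q"
  proof (rule set_eqI)
    fix x show "x \<in> doubled_parts (grow0 q) \<longleftrightarrow> x \<in> Suc ` doubled_parts q"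
      by (cases x) (auto simp: doubled_parts_def count_grow0)
  qed
  then show ?thesis
    by (simp add: twoparts_eq sorted_list_of_set_image_strict_mono finite_doubled_parts
        strict_mono_Suc_iff rev_map)
qed

lemma twoparts_grow1:
  assumes "count q 1 = 0"
  shows "twoparts (grow1 q) = map Suc (twoparts q)"
proof -
  have "doubled_parts (grow1 q) = Suc ` doubled_parts q"
  proof (rule set_eqI)
    fix x show "x \<in> doubled_parts (grow1 q) \<longleftrightarrow> x \<in> Suc ` doubled_parts q"
      using assms by (cases x) (auto simp: doubled_parts_def count_grow1)
  qed
  then show ?thesis
    by (simp add: twoparts_eq sorted_list_of_set_image_strict_mono finite_doubled_parts
        strict_mono_Suc_iff rev_map)
qed

lemma twoparts_grow2:
  assumes "count q 0 = 0"
  shows "twoparts (grow2 q) = map (\<lambda>x. x + 2) (twoparts q) @ [2]"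
proof -
  have "doubled_parts (grow2 q) = insert 2 ((\<lambda>x. x + 2) ` doubled_parts q)"
  proof (rule set_eqI)
    fix x
    have "x \<in> (\<lambda>x. x + 2) ` A \<longleftrightarrow> 2 \<le> x \<and> x - 2 \<in> A" for A :: "nat set"
      by (auto simp: image_iff intro!: bexI[of _ "x - 2"])
    then show "x \<in> doubled_parts (grow2 q) \<longleftrightarrow> x \<in> insert 2 ((\<lambda>x. x + 2) ` doubled_parts q)"
      using assms by (auto simp: doubled_parts_def count_grow2)
  qed
  moreover have "\<forall>b\<in>(\<lambda>x. x + 2) ` doubled_parts q. 2 < b"
    using assms by (auto simp: doubled_parts_def intro!: Nat.gr0I)
  ultimately have "sorted_list_of_set (doubled_parts (grow2 q))
      = 2 # sorted_list_of_set ((\<lambda>x. x + 2) ` doubled_parts q)"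
    by (simp only: sorted_list_of_set_insert_min finite_doubled_parts finite_imageI)
  also have "\<dots> = 2 # map (\<lambda>x. x + 2) (sorted_list_of_set (doubled_parts q))"
    using sorted_list_of_set_image_strict_mono[OF finite_doubled_parts, of "\<lambda>x. x + 2" q]
    by (simp add: strict_mono_def)
  finally show ?thesis by (simp add: twoparts_eq rev_map)
qed

lemma Rpart_map_Suc:
  assumes "twoparts q = map Suc (twoparts q')"
  shows "Dnum q = Dnum q'" "Rpart q i = (if 1 \<le> i \<and> i \<le> Dnum q' then Rpart q' i + 1 else 0)"
  using assms by (auto simp: Dnum_def Rpart_def)

lemma Rpart_append_two:
  assumes "twoparts q = map (\<lambda>x. x + 2) (twoparts q') @ [2]"
  shows "Dnum q = Suc (Dnum q')"
    "Rpart q i = (if 1 \<le> i \<and> i \<le> Dnum q' then Rpart q' i + 2 else if i = Suc (Dnum q') then 2 else 0)"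
  using assms by (auto simp: Dnum_def Rpart_def nth_append)

lemma Rpart_in_mset: "1 \<le> i \<Longrightarrow> i \<le> Dnum q \<Longrightarrow> Rpart q i \<in># q"
proof -
  assume i: "1 \<le> i" "i \<le> Dnum q"
  then have "Rpart q i \<in> set (twoparts q)" by (simp add: Rpart_def Dnum_def)
  also have "set (twoparts q) = doubled_parts q" by (simp add: twoparts_eq finite_doubled_parts)
  finally show ?thesis by (simp add: doubled_parts_def flip: count_greater_zero_iff)
qed

lemma Rpart_out_of_range: "\<not> (1 \<le> i \<and> i \<le> Dnum q) \<Longrightarrow> Rpart q i = 0"
  unfolding Rpart_def by auto

lemma piece_grow0:
  assumes pos: "\<forall>y\<in>#q. 0 < y" and k: "k \<le> Dnum q"
  shows "piece (grow0 q) k = image_mset Suc (piece q k)"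
proof -
  note R = Rpart_map_Suc[OF twoparts_grow0]
  have "filter_mset (\<lambda>y. Rpart (grow0 q) (Suc k) < Suc y \<and> (k = 0 \<or> Suc y < Rpart (grow0 q) k)) q
      = piece q k"
    unfolding piece_def using pos k by (intro filter_mset_cong) (auto simp: R Rpart_out_of_range)
  then show ?thesis by (simp add: piece_def grow0_def filter_mset_image_mset)
qed

lemma piece_grow1:
  assumes pos: "\<forall>y\<in>#q. 2 \<le> y" and k: "k \<le> Dnum q"
  shows "piece (grow1 q) k = (if k = Dnum q then {#2#} else {#}) + image_mset Suc (piece q k)"
proof -
  have "count q 1 = 0" using pos by (auto simp: count_eq_zero_iff)
  note R = Rpart_map_Suc[OF twoparts_grow1[OF this]]
  have Rge: "1 \<le> i \<Longrightarrow> i \<le> Dnum q \<Longrightarrow> 2 \<le> Rpart q i" for i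
    using Rpart_in_mset pos by blast
  define P where "P = (\<lambda>x. Rpart (grow1 q) (Suc k) < x \<and> (k = 0 \<or> x < Rpart (grow1 q) k))"
  have "filter_mset (\<lambda>y. P (Suc y)) q = piece q k"
    unfolding piece_def P_def using pos k by (intro filter_mset_cong) (auto simp: R Rpart_out_of_range)
  moreover have "P 2 \<longleftrightarrow> k = Dnum q"
    using k Rge[of k] Rge[of "Suc k"] by (cases "k = Dnum q") (auto simp: P_def R)
  moreover have "piece (grow1 q) k = filter_mset P (grow1 q)"
    unfolding piece_def P_def ..
  ultimately show ?thesis
    by (simp only: grow1_def filter_mset_add_mset filter_mset_image_mset) simp
qed

lemma piece_grow2:
  assumes pos: "\<forall>y\<in>#q. 2 \<le> y"
  shows "k \<le> Dnum q \<Longrightarrow> piece (grow2 q) k = image_mset (\<lambda>x. x + 2) (piece q k)"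
    and "piece (grow2 q) (Suc (Dnum q)) = {#}"
proof -
  have "count q 0 = 0" using pos by (auto simp: count_eq_zero_iff)
  note R = Rpart_append_two[OF twoparts_grow2[OF this]]
  have Rge: "1 \<le> i \<Longrightarrow> i \<le> Dnum q \<Longrightarrow> 2 \<le> Rpart q i" for i
    using Rpart_in_mset pos by blast
  have "Rpart (grow2 q) (Suc (Suc (Dnum q))) = 0" "Rpart (grow2 q) (Suc (Dnum q)) = 2"
    by (simp_all add: R)
  then show "piece (grow2 q) (Suc (Dnum q)) = {#}"
    using pos by (auto simp: piece_def grow2_def filter_mset_eq_conv)
  assume k: "k \<le> Dnum q"
  define P where "P = (\<lambda>x. Rpart (grow2 q) (Suc k) < x \<and> (k = 0 \<or> x < Rpart (grow2 q) k))"
  have "filter_mset (\<lambda>y. P (y + 2)) q = piece q k"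
    unfolding piece_def P_def using pos k by (intro filter_mset_cong) (auto simp: R Rpart_out_of_range)
  moreover have "\<not> P 2"
    using k Rge[of k] Rge[of "Suc k"] by (auto simp: P_def R)
  moreover have "piece (grow2 q) k = filter_mset P (grow2 q)"
    unfolding piece_def P_def ..
  ultimately show "piece (grow2 q) k = image_mset (\<lambda>x. x + 2) (piece q k)"
    by (simp only: grow2_def filter_mset_add_mset filter_mset_image_mset if_False)
qed

definition block_mult :: "nat multiset \<Rightarrow> nat \<Rightarrow> nat" where
  "block_mult q i = Rpart q i - Rpart q (Suc i) - size (piece q i)"

definition shifted_pieces :: "nat multiset \<Rightarrow> nat multiset" where
  "shifted_pieces q = (\<Sum>i\<in>{0..Dnum q}. image_mset (\<lambda>x. x + 2 * i) (piece q i))"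

lemma f_map_eq:
  "f_map q = (\<Sum>i\<in>{1..Dnum q}. replicate_mset (block_mult q i) (2 * i)) + shifted_pieces q"
  by (simp add: f_map_def block_mult_def shifted_pieces_def)

lemma f_data_empty: "Dnum {#} = 0" "shifted_pieces {#} = {#}"
proof -
  have "twoparts {#} = []" by (simp add: twoparts_def)
  then show "Dnum {#} = 0" by (simp add: Dnum_def)
  moreover have "piece {#} 0 = {#}" by (simp add: piece_def)
  ultimately show "shifted_pieces {#} = {#}" by (simp add: shifted_pieces_def)
qed

text \<open>The hypothesis on the last block excludes truncated subtraction in
  \<open>block_mult q (Dnum q)\<close>.\<close>
lemma f_data_grow0:
  assumes pos: "\<forall>y\<in>#q. 0 < y" and last: "1 \<le> Dnum q \<longrightarrow> 0 < block_mult q (Dnum q)"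
  shows "Dnum (grow0 q) = Dnum q"
    and "1 \<le> i \<Longrightarrow> i \<le> Dnum q \<Longrightarrow>
      block_mult (grow0 q) i = block_mult q i + (if i = Dnum q then 1 else 0)"
    and "shifted_pieces (grow0 q) = image_mset Suc (shifted_pieces q)"
proof -
  note R = Rpart_map_Suc[OF twoparts_grow0]
  note pc = piece_grow0[OF pos]
  show D: "Dnum (grow0 q) = Dnum q" by (rule R(1))
  show "1 \<le> i \<Longrightarrow> i \<le> Dnum q \<Longrightarrow>
      block_mult (grow0 q) i = block_mult q i + (if i = Dnum q then 1 else 0)"
    using last by (auto simp: block_mult_def R pc Rpart_out_of_range)
  have "shifted_pieces (grow0 q)
      = (\<Sum>i\<in>{0..Dnum q}. image_mset Suc (image_mset (\<lambda>x. x + 2 * i) (piece q i)))"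
    unfolding shifted_pieces_def D by (rule sum.cong) (auto simp: pc multiset.map_comp o_def)
  then show "shifted_pieces (grow0 q) = image_mset Suc (shifted_pieces q)"
    by (simp add: shifted_pieces_def image_mset_sum)
qed

lemma f_data_grow1:
  assumes pos: "\<forall>y\<in>#q. 2 \<le> y"
  shows "Dnum (grow1 q) = Dnum q"
    and "1 \<le> i \<Longrightarrow> i \<le> Dnum q \<Longrightarrow> block_mult (grow1 q) i = block_mult q i"
    and "shifted_pieces (grow1 q) = add_mset (2 * Dnum q + 2) (image_mset Suc (shifted_pieces q))"
proof -
  have "count q 1 = 0" using pos by (auto simp: count_eq_zero_iff)
  note R = Rpart_map_Suc[OF twoparts_grow1[OF this]]
  note pc = piece_grow1[OF pos]
  show D: "Dnum (grow1 q) = Dnum q" by (rule R(1))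
  show "1 \<le> i \<Longrightarrow> i \<le> Dnum q \<Longrightarrow> block_mult (grow1 q) i = block_mult q i"
    by (auto simp: block_mult_def R pc Rpart_out_of_range)
  have "shifted_pieces (grow1 q) = (\<Sum>i\<in>{0..Dnum q}. (if i = Dnum q then {#2 + 2 * i#} else {#})
      + image_mset Suc (image_mset (\<lambda>x. x + 2 * i) (piece q i)))"
    unfolding shifted_pieces_def D by (rule sum.cong) (auto simp: pc multiset.map_comp o_def)
  also have "\<dots> = {#2 + 2 * Dnum q#} + image_mset Suc (shifted_pieces q)"
    by (simp add: sum.distrib shifted_pieces_def image_mset_sum)
  finally show "shifted_pieces (grow1 q) = add_mset (2 * Dnum q + 2) (image_mset Suc (shifted_pieces q))"
    by (simp add: add.commute)
qed

lemma f_data_grow2: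
  assumes pos: "\<forall>y\<in>#q. 2 \<le> y"
  shows "Dnum (grow2 q) = Suc (Dnum q)"
    and "1 \<le> i \<Longrightarrow> i \<le> Dnum q \<Longrightarrow> block_mult (grow2 q) i = block_mult q i"
    and "block_mult (grow2 q) (Suc (Dnum q)) = 2"
    and "shifted_pieces (grow2 q) = image_mset (\<lambda>x. x + 2) (shifted_pieces q)"
proof -
  have "count q 0 = 0" using pos by (auto simp: count_eq_zero_iff)
  note R = Rpart_append_two[OF twoparts_grow2[OF this]]
  note pc = piece_grow2[OF pos]
  show D: "Dnum (grow2 q) = Suc (Dnum q)" by (rule R(1))
  show "1 \<le> i \<Longrightarrow> i \<le> Dnum q \<Longrightarrow> block_mult (grow2 q) i = block_mult q i"
    by (auto simp: block_mult_def R pc Rpart_out_of_range)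
  show "block_mult (grow2 q) (Suc (Dnum q)) = 2"
    by (simp add: block_mult_def R pc)
  have "shifted_pieces (grow2 q)
      = (\<Sum>i\<in>{0..Dnum q}. image_mset (\<lambda>x. x + 2) (image_mset (\<lambda>x. x + 2 * i) (piece q i)))
        + image_mset (\<lambda>x. x + 2 * Suc (Dnum q)) (piece (grow2 q) (Suc (Dnum q)))"
    unfolding shifted_pieces_def D sum.atLeast0_atMost_Suc
    by (rule arg_cong2[where f="(+)"], rule sum.cong) (auto simp: pc multiset.map_comp o_def)
  then show "shifted_pieces (grow2 q) = image_mset (\<lambda>x. x + 2) (shifted_pieces q)"
    by (simp add: shifted_pieces_def image_mset_sum pc)
qed

lemma G1_iff:
  "q \<in> G1 \<longleftrightarrow> count q 0 = 0 \<and> count q 1 = 0 \<and> (\<forall>j\<ge>1. count q j + count q (Suc j) \<le> 2)"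
  by (simp add: G1_def is_partition_def count_eq_zero_iff)

lemma G1_parts_ge2: "q \<in> G1 \<Longrightarrow> \<forall>y\<in>#q. 2 \<le> y"
proof
  fix y assume "q \<in> G1" "y \<in># q"
  then have "y \<noteq> 0" "y \<noteq> 1" by (auto simp: G1_iff simp flip: not_in_iff intro: gr0I)
  then show "2 \<le> y" by linarith
qed

lemma G1_adjacent: "q \<in> G1 \<Longrightarrow> count q j + count q (Suc j) \<le> 2"
  by (cases j) (auto simp: G1_iff)

lemma G1_count_two: "q \<in> G1 \<Longrightarrow> count q 2 \<le> 2"
  using G1_adjacent[of q 1] by (simp add: numeral_2_eq_2)

lemma grow0_in_G1:
  assumes "q \<in> G1" shows "grow0 q \<in> G1"
proof -
  have "count q (j - 1) + count q j \<le> 2" if "1 \<le> j" for j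
    using G1_adjacent[OF assms, of "j - 1"] that by simp
  then show ?thesis using assms by (auto simp: G1_iff count_grow0)
qed

lemma grow1_in_G1:
  assumes "q \<in> G1" "count q 2 \<le> 1" shows "grow1 q \<in> G1"
proof -
  have "count q (j - 1) + count q j \<le> 2" if "1 \<le> j" for j
    using G1_adjacent[OF assms(1), of "j - 1"] that by simp
  then show ?thesis using assms by (auto simp: G1_iff count_grow1)
qed

lemma grow2_in_G1:
  assumes "q \<in> G1" shows "grow2 q \<in> G1"
proof -
  have "count q (j - 2) + count q (j - 1) \<le> 2" if "2 \<le> j" for j
    using G1_adjacent[OF assms, of "j - 2"] that by (simp add: Suc_diff_Suc numeral_2_eq_2)
  then show ?thesis using assms by (auto simp: G1_iff count_grow2)
qed

lemma count_two_grow: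
  assumes "q \<in> G1"
  shows "count (grow0 q) 2 = 0" "count (grow1 q) 2 = 1" "count (grow2 q) 2 = 2"
  using assms by (simp_all add: G1_iff count_grow0 count_grow1 count_grow2)

lemma G1_eq_grow0:
  assumes q: "q \<in> G1" and two: "count q 2 = 0"
  obtains q' where "q' \<in> G1" "q = grow0 q'"
proof -
  have "\<forall>x\<in>#q. 1 \<le> x" using G1_parts_ge2[OF q] by auto
  then obtain q' where q': "q = image_mset (\<lambda>x. x + 1) q'" "\<And>j. count q' j = count q (j + 1)"
    using obtain_image_mset_add by blast
  have "q' \<in> G1"
    using q two G1_adjacent[OF q] by (auto simp: G1_iff q'(2) numeral_2_eq_2)
  moreover have "q = grow0 q'" by (simp add: q'(1) grow0_def)
  ultimately show ?thesis by (rule that)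
qed

lemma G1_eq_grow1:
  assumes q: "q \<in> G1" and two: "count q 2 = 1"
  obtains q' where "q' \<in> G1" "count q' 2 \<le> 1" "q = grow1 q'"
proof -
  define q0 where "q0 = q - {#2#}"
  have "2 \<in># q" using two by (simp flip: count_greater_zero_iff)
  then have q0: "q = add_mset 2 q0" by (simp add: q0_def insert_DiffM)
  have "\<forall>x\<in>#q0. 1 \<le> x" using G1_parts_ge2[OF q] q0 by auto
  then obtain q' where q': "q0 = image_mset (\<lambda>x. x + 1) q'" "\<And>j. count q' j = count q0 (j + 1)"
    using obtain_image_mset_add by blast
  have c: "count q' j = count q (Suc j) - (if j = 1 then 1 else 0)" for j
    by (simp add: q'(2) q0_def)
  have "q' \<in> G1"
    using q two G1_adjacent[OF q] G1_adjacent[OF q, of 2] by (auto simp: G1_iff c numeral_2_eq_2)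
  moreover have "count q' 2 \<le> 1" using two G1_adjacent[OF q, of 2] by (simp add: c numeral_2_eq_2)
  moreover have "q = grow1 q'" by (simp add: q0 q'(1) grow1_def)
  ultimately show ?thesis by (rule that)
qed

lemma G1_eq_grow2:
  assumes q: "q \<in> G1" and two: "count q 2 = 2"
  obtains q' where "q' \<in> G1" "q = grow2 q'"
proof -
  define q0 where "q0 = q - {#2, 2#}"
  have q0: "q = add_mset 2 (add_mset 2 q0)"
    using two by (simp add: q0_def multiset_eq_iff)
  have "\<forall>x\<in>#q0. 2 \<le> x" using G1_parts_ge2[OF q] q0 by auto
  then obtain q' where q': "q0 = image_mset (\<lambda>x. x + 2) q'" "\<And>j. count q' j = count q0 (j + 2)"
    using obtain_image_mset_add by blast
  have c: "count q' j = count q (j + 2) - (if j = 0 then 2 else 0)" for j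
    by (simp add: q'(2) q0_def numeral_2_eq_2)
  have "count q 3 = 0" using two G1_adjacent[OF q, of 2] by (simp add: numeral_3_eq_3 numeral_2_eq_2)
  then have "q' \<in> G1"
    using q two G1_adjacent[OF q] by (auto simp: G1_iff c numeral_3_eq_3 numeral_2_eq_2)
  moreover have "q = grow2 q'" by (simp add: q0 q'(1) grow2_def)
  ultimately show ?thesis by (rule that)
qed

lemma sum_mset_grow:
  "sum_mset (grow0 q) = sum_mset q + size q"
  "sum_mset (grow1 q) = sum_mset q + size q + 2"
  "sum_mset (grow2 q) = sum_mset q + 2 * size q + 4"
  by (simp_all only: grow0_def grow1_def grow2_def sum_mset_image_Suc sum_mset_image_add
      sum_mset.add_mset)

lemma size_grow:
  "size (grow0 q) = size q" "size (grow1 q) = size q + 1" "size (grow2 q) = size q + 2"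
  by (simp_all add: grow0_def grow1_def grow2_def)

lemma G1_induct [consumes 1, case_names empty grow0 grow1 grow2]:
  assumes "q \<in> G1" and "P {#}"
    and "\<And>q. q \<in> G1 \<Longrightarrow> P q \<Longrightarrow> P (grow0 q)"
    and "\<And>q. q \<in> G1 \<Longrightarrow> count q 2 \<le> 1 \<Longrightarrow> P q \<Longrightarrow> P (grow1 q)"
    and "\<And>q. q \<in> G1 \<Longrightarrow> P q \<Longrightarrow> P (grow2 q)"
  shows "P q"
  using assms(1)
proof (induction "sum_mset q" arbitrary: q rule: less_induct)
  case (less q)
  consider "count q 2 = 0" | "count q 2 = 1" | "count q 2 = 2"
    using G1_count_two[OF less.prems] by linarith
  then show ?case
  proof cases
    case 1
    show ?thesis
    proof (cases "q = {#}")
      case False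
      obtain q' where q': "q' \<in> G1" "q = grow0 q'" using G1_eq_grow0[OF less.prems 1] .
      then have "sum_mset q' < sum_mset q"
        using False by (auto simp: sum_mset_image_Suc grow0_def nonempty_has_size)
      then show ?thesis using less.hyps q' assms(3) by blast
    qed (use assms(2) in simp)
  next
    case 2
    obtain q' where q': "q' \<in> G1" "count q' 2 \<le> 1" "q = grow1 q'" using G1_eq_grow1[OF less.prems 2] .
    then show ?thesis using less.hyps assms(4) by (simp add: sum_mset_grow)
  next
    case 3
    obtain q' where q': "q' \<in> G1" "q = grow2 q'" using G1_eq_grow2[OF less.prems 3] .
    then show ?thesis using less.hyps assms(5) by (simp add: sum_mset_grow)
  qed
qed

section \<open>An invariant of f on G1\<close>

definition distinct_parts_ge :: "nat \<Rightarrow> nat multiset \<Rightarrow> bool" where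
  "distinct_parts_ge k P \<longleftrightarrow> (\<forall>x\<in>#P. k \<le> x) \<and> (\<forall>x. count P x \<le> 1)"

lemma distinct_parts_ge_image_add:
  "distinct_parts_ge k P \<Longrightarrow> distinct_parts_ge (k + m) (image_mset (\<lambda>x. x + m) P)"
  by (auto simp: distinct_parts_ge_def count_image_mset_add)

lemma distinct_parts_ge_image_Suc:
  "distinct_parts_ge k P \<Longrightarrow> distinct_parts_ge (Suc k) (image_mset Suc P)"
  by (auto simp: distinct_parts_ge_def count_image_mset_Suc)

lemma distinct_parts_ge_mono: "distinct_parts_ge k P \<Longrightarrow> j \<le> k \<Longrightarrow> distinct_parts_ge j P"
  by (auto simp: distinct_parts_ge_def)

lemma distinct_parts_ge_shift_down:
  assumes "distinct_parts_ge (k + m) P"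
  obtains P' where "P = image_mset (\<lambda>x. x + m) P'" "distinct_parts_ge k P'"
proof -
  have "\<forall>x\<in>#P. m \<le> x" using assms by (auto simp: distinct_parts_ge_def)
  then obtain P' where P': "P = image_mset (\<lambda>x. x + m) P'" "\<And>j. count P' j = count P (j + m)"
    using obtain_image_mset_add by blast
  have "\<forall>x\<in>#P'. k \<le> x" using assms by (auto simp: distinct_parts_ge_def P'(1))
  moreover have "\<forall>x. count P' x \<le> 1" using assms by (simp add: distinct_parts_ge_def P'(2))
  ultimately show ?thesis using P'(1) that by (simp add: distinct_parts_ge_def)
qed

lemma distinct_parts_ge_Suc:
  assumes "distinct_parts_ge k P" "k \<notin># P"
  shows "distinct_parts_ge (Suc k) P"
proof -
  have "Suc k \<le> x" if "x \<in># P" for x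
  proof -
    have "x \<noteq> k" "k \<le> x" using assms that by (auto simp: distinct_parts_ge_def)
    then show ?thesis by simp
  qed
  then show ?thesis using assms(1) by (simp add: distinct_parts_ge_def)
qed

lemma distinct_parts_ge_add_mset:
  assumes "distinct_parts_ge k (add_mset k P)"
  shows "distinct_parts_ge (Suc k) P"
proof (rule distinct_parts_ge_Suc)
  have c: "count (add_mset k P) x \<le> 1" for x using assms by (simp add: distinct_parts_ge_def)
  have "count P x \<le> 1" for x using c[of x] by (cases "x = k") simp_all
  then show "distinct_parts_ge k P" using assms by (simp add: distinct_parts_ge_def)
  show "k \<notin># P" using c[of k] by (simp add: not_in_iff)
qed

lemma distinct_parts_ge_count_below:
  "distinct_parts_ge k P \<Longrightarrow> y < k \<Longrightarrow> count P y = 0"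
  by (auto simp: distinct_parts_ge_def count_eq_zero_iff)

lemma sum_mset_f_map:
  "sum_mset (f_map q) = (\<Sum>i\<in>{1..Dnum q}. 2 * i * block_mult q i) + sum_mset (shifted_pieces q)"
  by (simp add: f_map_eq sum_mset_sum mult.commute)

text \<open>The clause on \<open>count q 2\<close> says that the data of f reveal by which grow
  operation q was obtained; this drives the injectivity proof.\<close>
definition f_invariant :: "nat multiset \<Rightarrow> bool" where
  "f_invariant q \<longleftrightarrow>
     (\<forall>i\<in>{1..Dnum q}. 2 \<le> block_mult q i) \<and>
     distinct_parts_ge (2 * Dnum q + 2) (shifted_pieces q) \<and>
     size q = size (shifted_pieces q) + 2 * Dnum q \<and>
     count q 2 = (if 1 \<le> Dnum q \<and> block_mult q (Dnum q) = 2 then 2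
                  else if 2 * Dnum q + 2 \<in># shifted_pieces q then 1 else 0) \<and>
     sum_mset (f_map q) = sum_mset q"

lemma f_invariant_grow0:
  assumes q: "q \<in> G1" and inv: "f_invariant q"
  shows "f_invariant (grow0 q)"
proof -
  let ?D = "Dnum q" and ?a = "block_mult q" and ?P = "shifted_pieces q"
  have a2: "\<forall>i\<in>{1..?D}. 2 \<le> ?a i" and P: "distinct_parts_ge (2 * ?D + 2) ?P"
    and size: "size q = size ?P + 2 * ?D" and sum: "sum_mset (f_map q) = sum_mset q"
    using inv by (simp_all add: f_invariant_def)
  have pos: "\<forall>y\<in>#q. 0 < y" using G1_parts_ge2[OF q] by auto
  have last: "1 \<le> ?D \<longrightarrow> 0 < ?a ?D" using a2 by force
  note d = f_data_grow0[OF pos last]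
  have D: "Dnum (grow0 q) = ?D" and P': "shifted_pieces (grow0 q) = image_mset Suc ?P"
    using d(1,3) .
  have a': "block_mult (grow0 q) i = ?a i + (if i = ?D then 1 else 0)" if "i \<in> {1..?D}" for i
    using that d(2) by simp
  have blocks: "(\<Sum>i\<in>{1..?D}. 2 * i * block_mult (grow0 q) i) = (\<Sum>i\<in>{1..?D}. 2 * i * ?a i) + 2 * ?D"
  proof -
    have "(\<Sum>i\<in>{1..?D}. 2 * i * block_mult (grow0 q) i)
        = (\<Sum>i\<in>{1..?D}. 2 * i * ?a i + (if i = ?D then 2 * i else 0))"
      by (rule sum.cong) (auto simp: a')
    also have "\<dots> = (\<Sum>i\<in>{1..?D}. 2 * i * ?a i) + 2 * ?D"
      by (cases "?D = 0") (simp_all add: sum.distrib)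
    finally show ?thesis .
  qed
  have "2 \<le> block_mult (grow0 q) i" if "i \<in> {1..?D}" for i
  proof -
    have "2 \<le> ?a i" using a2 that by blast
    then show ?thesis by (simp add: a'[OF that])
  qed
  then have "\<forall>i\<in>{1..Dnum (grow0 q)}. 2 \<le> block_mult (grow0 q) i" by (simp add: D)
  moreover have "distinct_parts_ge (2 * Dnum (grow0 q) + 2) (shifted_pieces (grow0 q))"
    using distinct_parts_ge_image_Suc[OF P] by (simp add: D P' distinct_parts_ge_mono)
  moreover have "size (grow0 q) = size (shifted_pieces (grow0 q)) + 2 * Dnum (grow0 q)"
    using size by (simp add: D P' size_grow)
  moreover have "\<not> (1 \<le> ?D \<and> block_mult (grow0 q) ?D = 2)"
  proof
    assume "1 \<le> ?D \<and> block_mult (grow0 q) ?D = 2"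
    moreover from this have "2 \<le> ?a ?D" using a2 by simp
    ultimately show False using a'[of ?D] by simp
  qed
  moreover have "2 * ?D + 2 \<notin># shifted_pieces (grow0 q)"
    using P by (auto simp: P' distinct_parts_ge_def)
  moreover have "sum_mset (f_map (grow0 q)) = sum_mset (grow0 q)"
    using sum size blocks by (simp add: sum_mset_f_map D P' sum_mset_grow sum_mset_image_Suc)
  ultimately show ?thesis
    unfolding f_invariant_def using count_two_grow(1)[OF q] by (simp add: D)
qed

lemma f_invariant_grow1:
  assumes q: "q \<in> G1" and two: "count q 2 \<le> 1" and inv: "f_invariant q"
  shows "f_invariant (grow1 q)"
proof -
  let ?D = "Dnum q" and ?a = "block_mult q" and ?P = "shifted_pieces q"
  have a2: "\<forall>i\<in>{1..?D}. 2 \<le> ?a i" and P: "distinct_parts_ge (2 * ?D + 2) ?P"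
    and size: "size q = size ?P + 2 * ?D" and sum: "sum_mset (f_map q) = sum_mset q"
    and cnt: "count q 2 = (if 1 \<le> ?D \<and> ?a ?D = 2 then 2 else if 2 * ?D + 2 \<in># ?P then 1 else 0)"
    using inv by (simp_all add: f_invariant_def)
  note d = f_data_grow1[OF G1_parts_ge2[OF q]]
  have a': "block_mult (grow1 q) i = ?a i" if "i \<in> {1..?D}" for i using that d(2) by simp
  have P': "shifted_pieces (grow1 q) = add_mset (2 * ?D + 2) (image_mset Suc ?P)" by (fact d(3))
  have fresh: "2 * ?D + 2 \<notin># image_mset Suc ?P" using P by (auto simp: distinct_parts_ge_def)
  have "\<forall>i\<in>{1..Dnum (grow1 q)}. 2 \<le> block_mult (grow1 q) i" using a2 a' by (simp add: d(1))
  moreover have "distinct_parts_ge (2 * Dnum (grow1 q) + 2) (shifted_pieces (grow1 q))"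
    using distinct_parts_ge_image_Suc[OF P] fresh
    by (auto simp: d(1) P' distinct_parts_ge_def count_eq_zero_iff)
  moreover have "size (grow1 q) = size (shifted_pieces (grow1 q)) + 2 * Dnum (grow1 q)"
    using size by (simp add: d(1) P' size_grow)
  moreover have "\<not> (1 \<le> ?D \<and> block_mult (grow1 q) ?D = 2)" using two cnt a'[of ?D] by auto
  moreover have "sum_mset (f_map (grow1 q)) = sum_mset (grow1 q)"
  proof -
    have "(\<Sum>i\<in>{1..?D}. 2 * i * block_mult (grow1 q) i) = (\<Sum>i\<in>{1..?D}. 2 * i * ?a i)"
      by (rule sum.cong) (simp_all add: a')
    then show ?thesis
      using sum size by (simp add: sum_mset_f_map d(1) P' sum_mset_grow sum_mset_image_Suc)
  qed
  ultimately show ?thesis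
    unfolding f_invariant_def using count_two_grow(2)[OF q] by (simp add: d(1) P')
qed

lemma f_invariant_grow2:
  assumes q: "q \<in> G1" and inv: "f_invariant q"
  shows "f_invariant (grow2 q)"
proof -
  let ?D = "Dnum q" and ?a = "block_mult q" and ?P = "shifted_pieces q"
  have a2: "\<forall>i\<in>{1..?D}. 2 \<le> ?a i" and P: "distinct_parts_ge (2 * ?D + 2) ?P"
    and size: "size q = size ?P + 2 * ?D" and sum: "sum_mset (f_map q) = sum_mset q"
    using inv by (simp_all add: f_invariant_def)
  note d = f_data_grow2[OF G1_parts_ge2[OF q]]
  have a': "block_mult (grow2 q) i = ?a i" if "i \<in> {1..?D}" for i using that d(2) by simp
  have "\<forall>i\<in>{1..Dnum (grow2 q)}. 2 \<le> block_mult (grow2 q) i"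
    using a2 a' d(3) by (auto simp: d(1) le_Suc_eq)
  moreover have "distinct_parts_ge (2 * Dnum (grow2 q) + 2) (shifted_pieces (grow2 q))"
    using distinct_parts_ge_image_add[OF P, of 2] by (simp add: d(1,4) add.commute)
  moreover have "size (grow2 q) = size (shifted_pieces (grow2 q)) + 2 * Dnum (grow2 q)"
    using size by (simp add: d(1,4) size_grow)
  moreover have "sum_mset (f_map (grow2 q)) = sum_mset (grow2 q)"
  proof -
    have "(\<Sum>i\<in>{1..?D}. 2 * i * block_mult (grow2 q) i) = (\<Sum>i\<in>{1..?D}. 2 * i * ?a i)"
      by (rule sum.cong) (simp_all add: a')
    then have "(\<Sum>i\<in>{1..Suc ?D}. 2 * i * block_mult (grow2 q) i)
        = (\<Sum>i\<in>{1..?D}. 2 * i * ?a i) + 4 * Suc ?D"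
      by (simp add: d(3))
    moreover have "sum_mset (shifted_pieces (grow2 q)) = sum_mset ?P + 2 * size ?P"
      by (simp only: d(4) sum_mset_image_add)
    ultimately show ?thesis
      using sum size by (simp add: sum_mset_f_map d(1) sum_mset_grow)
  qed
  ultimately show ?thesis
    unfolding f_invariant_def using count_two_grow(3)[OF q] by (simp add: d(1,3))
qed

lemma f_invariant: "q \<in> G1 \<Longrightarrow> f_invariant q"
proof (induction q rule: G1_induct)
  case empty
  then show ?case
    by (simp add: f_invariant_def f_data_empty f_map_eq distinct_parts_ge_def)
next
  case (grow0 q) then show ?case by (rule f_invariant_grow0)
next
  case (grow1 q) then show ?case by (rule f_invariant_grow1)
next
  case (grow2 q) then show ?case by (rule f_invariant_grow2)
qed

lemma f_invariantD:
  assumes "q \<in> G1"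
  shows "i \<in> {1..Dnum q} \<Longrightarrow> 2 \<le> block_mult q i"
    and "distinct_parts_ge (2 * Dnum q + 2) (shifted_pieces q)"
    and "size q = size (shifted_pieces q) + 2 * Dnum q"
    and "count q 2 = (if 1 \<le> Dnum q \<and> block_mult q (Dnum q) = 2 then 2
                      else if 2 * Dnum q + 2 \<in># shifted_pieces q then 1 else 0)"
    and "sum_mset (f_map q) = sum_mset q"
  using f_invariant[OF assms] by (auto simp: f_invariant_def)

lemma f_data_grow0_G1:
  assumes "q \<in> G1"
  shows "Dnum (grow0 q) = Dnum q"
    and "i \<in> {1..Dnum q} \<Longrightarrow> block_mult (grow0 q) i = block_mult q i + (if i = Dnum q then 1 else 0)"
    and "shifted_pieces (grow0 q) = image_mset Suc (shifted_pieces q)"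
proof -
  have "\<forall>y\<in>#q. 0 < y" using G1_parts_ge2[OF assms] by auto
  moreover have "1 \<le> Dnum q \<longrightarrow> 0 < block_mult q (Dnum q)"
    using f_invariantD(1)[OF assms, of "Dnum q"] by force
  ultimately show "Dnum (grow0 q) = Dnum q"
    and "i \<in> {1..Dnum q} \<Longrightarrow> block_mult (grow0 q) i = block_mult q i + (if i = Dnum q then 1 else 0)"
    and "shifted_pieces (grow0 q) = image_mset Suc (shifted_pieces q)"
    using f_data_grow0 by auto
qed

lemma count_two_eq_if_f_data_eq:
  assumes "q1 \<in> G1" "q2 \<in> G1" "Dnum q1 = Dnum q2"
    "\<forall>i\<in>{1..Dnum q1}. block_mult q1 i = block_mult q2 i" "shifted_pieces q1 = shifted_pieces q2"
  shows "count q1 2 = count q2 2"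
proof -
  have "1 \<le> Dnum q1 \<Longrightarrow> block_mult q1 (Dnum q1) = block_mult q2 (Dnum q1)" using assms(4) by simp
  then show ?thesis using f_invariantD(4)[OF assms(1)] f_invariantD(4)[OF assms(2)] assms(3,5) by auto
qed

lemma f_data_inj:
  assumes "q1 \<in> G1" "q2 \<in> G1" "Dnum q1 = Dnum q2"
    "\<forall>i\<in>{1..Dnum q1}. block_mult q1 i = block_mult q2 i" "shifted_pieces q1 = shifted_pieces q2"
  shows "q1 = q2"
  using assms
proof (induction q1 arbitrary: q2 rule: G1_induct)
  case empty
  then show ?case using f_invariantD(3)[of q2] by (simp add: f_data_empty)
next
  case (grow0 q1)
  have "count q2 2 = 0"
    using count_two_eq_if_f_data_eq[OF grow0_in_G1[OF grow0.hyps(1)] grow0.prems]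
      count_two_grow(1)[OF grow0.hyps(1)] by simp
  then obtain q2' where q2': "q2' \<in> G1" "q2 = grow0 q2'" using G1_eq_grow0[OF grow0.prems(1)] by blast
  note d1 = f_data_grow0_G1[OF grow0.hyps(1)] and d2 = f_data_grow0_G1[OF q2'(1)]
  have D: "Dnum q1 = Dnum q2'" using grow0.prems(2) d1(1) d2(1) by (simp add: q2'(2))
  moreover have "\<forall>i\<in>{1..Dnum q1}. block_mult q1 i = block_mult q2' i"
    using grow0.prems(3) d1(2) d2(2) D by (simp add: q2'(2) d1(1))
  moreover have "shifted_pieces q1 = shifted_pieces q2'"
    using grow0.prems(4) d1(3) d2(3) inj_onD[OF multiset.inj_map[OF inj_Suc]] by (simp add: q2'(2))
  ultimately show ?case using grow0.IH q2' by blast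
next
  case (grow1 q1)
  have "count q2 2 = 1"
    using count_two_eq_if_f_data_eq[OF grow1_in_G1[OF grow1.hyps(1,2)] grow1.prems]
      count_two_grow(2)[OF grow1.hyps(1)] by simp
  then obtain q2' where q2': "q2' \<in> G1" "q2 = grow1 q2'" using G1_eq_grow1[OF grow1.prems(1)] by blast
  note d1 = f_data_grow1[OF G1_parts_ge2[OF grow1.hyps(1)]]
    and d2 = f_data_grow1[OF G1_parts_ge2[OF q2'(1)]]
  have D: "Dnum q1 = Dnum q2'" using grow1.prems(2) d1(1) d2(1) by (simp add: q2'(2))
  moreover have "\<forall>i\<in>{1..Dnum q1}. block_mult q1 i = block_mult q2' i"
    using grow1.prems(3) d1(2) d2(2) D by (simp add: q2'(2) d1(1))
  moreover have "shifted_pieces q1 = shifted_pieces q2'"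
    using grow1.prems(4) d1(3) d2(3) D inj_onD[OF multiset.inj_map[OF inj_Suc]] by (simp add: q2'(2))
  ultimately show ?case using grow1.IH q2' by blast
next
  case (grow2 q1)
  have "count q2 2 = 2"
    using count_two_eq_if_f_data_eq[OF grow2_in_G1[OF grow2.hyps(1)] grow2.prems]
      count_two_grow(3)[OF grow2.hyps(1)] by simp
  then obtain q2' where q2': "q2' \<in> G1" "q2 = grow2 q2'" using G1_eq_grow2[OF grow2.prems(1)] by blast
  note d1 = f_data_grow2[OF G1_parts_ge2[OF grow2.hyps(1)]]
    and d2 = f_data_grow2[OF G1_parts_ge2[OF q2'(1)]]
  have D: "Dnum q1 = Dnum q2'" using grow2.prems(2) d1(1) d2(1) by (simp add: q2'(2))
  moreover have "\<forall>i\<in>{1..Dnum q1}. block_mult q1 i = block_mult q2' i"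
    using grow2.prems(3) d1(2) d2(2) D by (simp add: q2'(2) d1(1))
  moreover have "shifted_pieces q1 = shifted_pieces q2'"
  proof (rule injD)
    show "inj (image_mset (\<lambda>x::nat. x + 2))" by (rule multiset.inj_map) (simp add: inj_def)
    show "image_mset (\<lambda>x. x + 2) (shifted_pieces q1) = image_mset (\<lambda>x. x + 2) (shifted_pieces q2')"
      using grow2.prems(4) d1(4) d2(4) by (simp add: q2'(2))
  qed
  ultimately show ?case using grow2.IH q2' by blast
qed

section \<open>The shape of A3 and of h on images of f\<close>

definition a3_form :: "nat \<Rightarrow> (nat \<Rightarrow> nat) \<Rightarrow> nat multiset \<Rightarrow> nat multiset" where
  "a3_form D b P = image_mset (\<lambda>x. x - 1) P + (\<Sum>i\<in>{1..D}. replicate_mset (b i) (2 * i))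
     + (\<Sum>i\<in>{1..D}. replicate_mset 2 (2 * i - 1))"

lemma a3_form_cong: "(\<And>i. i \<in> {1..D} \<Longrightarrow> b i = b' i) \<Longrightarrow> a3_form D b P = a3_form D b' P"
  unfolding a3_form_def by (metis (mono_tags, lifting) sum.cong)

lemma count_even_blocks:
  fixes D x :: nat
  shows "count (\<Sum>i\<in>{1..D}. replicate_mset (b i) (2 * i)) x =
    (if even x \<and> 2 \<le> x \<and> x \<le> 2 * D then b (x div 2) else 0)"
proof -
  have "count (\<Sum>i\<in>{1..D}. replicate_mset (b i) (2 * i)) x
      = (\<Sum>i\<in>{1..D}. if i = x div 2 then (if even x then b i else 0) else 0)"
    unfolding count_sum by (rule sum.cong) auto
  also have "\<dots> = (if even x \<and> 2 \<le> x \<and> x \<le> 2 * D then b (x div 2) else 0)"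
    by (subst sum.delta) auto
  finally show ?thesis .
qed

lemma count_odd_pairs:
  fixes D x :: nat
  shows "count (\<Sum>i\<in>{1..D}. replicate_mset 2 (2 * i - 1)) x = (if odd x \<and> x < 2 * D then 2 else 0)"
proof -
  have "count (\<Sum>i\<in>{1..D}. replicate_mset 2 (2 * i - 1)) x
      = (\<Sum>i\<in>{1..D}. if i = (x + 1) div 2 then (if odd x then 2 else 0) else 0)"
    unfolding count_sum by (rule sum.cong) auto
  also have "\<dots> = (if odd x \<and> x < 2 * D then 2 else 0)"
    by (subst sum.delta) auto
  finally show ?thesis .
qed

lemma count_a3_form:
  assumes "distinct_parts_ge (2 * D + 2) P"
  shows "count (a3_form D b P) x = count P (Suc x)
     + (if even x \<and> 2 \<le> x \<and> x \<le> 2 * D then b (x div 2) else 0)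
     + (if odd x \<and> x < 2 * D then 2 else 0)"
proof -
  have "\<forall>x\<in>#P. 1 \<le> x" using assms by (auto simp: distinct_parts_ge_def)
  from count_image_mset_diff[OF this, of x] show ?thesis
    unfolding a3_form_def count_union count_even_blocks count_odd_pairs by simp
qed

lemma a3_form_in_A3:
  assumes P: "distinct_parts_ge (2 * D + 2) P"
  shows "a3_form D b P \<in> A3"
proof -
  note c = count_a3_form[OF P, of b]
  have "count (a3_form D b P) 0 = 0" using c[of 0] distinct_parts_ge_count_below[OF P, of 1] by simp
  then have "is_partition (a3_form D b P)" by (simp add: is_partition_def count_eq_zero_iff)
  moreover have "count (a3_form D b P) (2 * i - 1) = 2" if "1 \<le> i" "i \<le> D" for i
    using c[of "2 * i - 1"] distinct_parts_ge_count_below[OF P, of "2 * i"] that by simp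
  moreover have "count (a3_form D b P) x \<le> 1" if "2 * D < x" for x
    using c[of x] that P by (simp add: distinct_parts_ge_def)
  ultimately show ?thesis unfolding A3_def by blast
qed

lemma a3_form_inj:
  assumes P1: "distinct_parts_ge (2 * D1 + 2) P1" and P2: "distinct_parts_ge (2 * D2 + 2) P2"
    and eq: "a3_form D1 b1 P1 = a3_form D2 b2 P2"
  shows "D1 = D2" "\<And>i. i \<in> {1..D1} \<Longrightarrow> b1 i = b2 i" "P1 = P2"
proof -
  have ce: "count (a3_form D1 b1 P1) x = count (a3_form D2 b2 P2) x" for x using eq by simp
  note c1 = count_a3_form[OF P1, of b1] and c2 = count_a3_form[OF P2, of b2]
  have no_less: False
    if Pa: "distinct_parts_ge (2 * Da + 2) Pa" and Pb: "distinct_parts_ge (2 * Db + 2) Pb"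
      and ce: "count (a3_form Da ba Pa) (2 * Da + 1) = count (a3_form Db bb Pb) (2 * Da + 1)"
      and lt: "Da < Db" for Da Db Pa Pb ba bb
  proof -
    have "count Pa (2 * Da + 2) \<le> 1" using Pa by (simp add: distinct_parts_ge_def)
    then show False
      using ce count_a3_form[OF Pa, of ba "2 * Da + 1"] count_a3_form[OF Pb, of bb "2 * Da + 1"] lt
      by simp
  qed
  show D: "D1 = D2"
    using no_less[OF P1 P2 ce] no_less[OF P2 P1 ce[symmetric]] by (cases D1 D2 rule: linorder_cases) blast+
  show "b1 i = b2 i" if "i \<in> {1..D1}" for i
    using ce[of "2 * i"] c1[of "2 * i"] c2[of "2 * i"] that D
      distinct_parts_ge_count_below[OF P1, of "Suc (2 * i)"] distinct_parts_ge_count_below[OF P2, of "Suc (2 * i)"] by simp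
  show "P1 = P2"
  proof (rule multiset_eqI)
    fix y
    show "count P1 y = count P2 y"
    proof (cases "y < 2 * D1 + 2")
      case True then show ?thesis using D distinct_parts_ge_count_below[OF P1] distinct_parts_ge_count_below[OF P2] by simp
    next
      case False
      then obtain x where "y = Suc x" "2 * D1 < x" by (intro that[of "y - 1"]) auto
      then show ?thesis using ce[of x] c1[of x] c2[of x] D by simp
    qed
  qed
qed

lemma A3_eq_a3_form:
  assumes l: "l \<in> A3"
  obtains D b P where "distinct_parts_ge (2 * D + 2) P" "l = a3_form D b P"
proof -
  from l obtain j where part: "is_partition l"
    and odd2: "\<And>i. 1 \<le> i \<Longrightarrow> i \<le> j \<Longrightarrow> count l (2 * i - 1) = 2"
    and big: "\<And>x. 2 * j < x \<Longrightarrow> count l x \<le> 1"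
    unfolding A3_def by blast
  define P where "P = image_mset Suc (filter_mset (\<lambda>x. 2 * j < x) l)"
  have cP: "count P (Suc x) = (if 2 * j < x then count l x else 0)" for x
    by (simp add: P_def count_image_mset_Suc)
  have P: "distinct_parts_ge (2 * j + 2) P"
    unfolding distinct_parts_ge_def
  proof (intro conjI ballI allI)
    fix x assume "x \<in># P" then show "2 * j + 2 \<le> x" by (auto simp: P_def)
  next
    fix x show "count P x \<le> 1"
      using cP[of "x - 1"] big[of "x - 1"] by (cases x) (simp_all add: P_def count_image_mset_Suc)
  qed
  have "l = a3_form j (\<lambda>i. count l (2 * i)) P"
  proof (rule multiset_eqI)
    fix x
    consider "2 * j < x" | "x = 0" | "even x" "0 < x" "x \<le> 2 * j" | "odd x" "x \<le> 2 * j"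
      by linarith
    then show "count l x = count (a3_form j (\<lambda>i. count l (2 * i)) P) x"
    proof cases
      case 2
      moreover have "count l 0 = 0" using part by (simp add: is_partition_def not_in_iff)
      ultimately show ?thesis using cP[of 0] by (simp add: count_a3_form[OF P])
    next
      case 4
      then obtain i where i: "x = 2 * i - 1" "1 \<le> i" "i \<le> j" by (intro that[of "(x + 1) div 2"]) (auto elim!: oddE)
      then show ?thesis using odd2[OF i(2,3)] cP[of x] 4 by (simp add: count_a3_form[OF P])
    qed (use cP[of x] in \<open>auto simp: count_a3_form[OF P]\<close>)
  qed
  with P show ?thesis by (rule that)
qed

lemma sum_mset_a3_form:
  assumes "distinct_parts_ge (2 * D + 2) P"
  shows "sum_mset (a3_form D b P) + size P + 2 * D = sum_mset P + (\<Sum>i\<in>{1..D}. 2 * i * (b i + 2))"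
proof -
  have "\<forall>x\<in>#P. 1 \<le> x" using assms by (auto simp: distinct_parts_ge_def)
  then have "sum_mset (image_mset (\<lambda>x. x - 1) P) + size P = sum_mset P"
    by (induction P) auto
  moreover have "(\<Sum>i\<in>{1..D}. b i * (2 * i)) + (\<Sum>i\<in>{1..D}. 2 * (2 * i - 1)) + 2 * D
      = (\<Sum>i\<in>{1..D}. 2 * i * (b i + 2))"
  proof -
    have "(\<Sum>i\<in>{1..D}. b i * (2 * i)) + (\<Sum>i\<in>{1..D}. 2 * (2 * i - 1)) + (\<Sum>i\<in>{1..D}. 2)
        = (\<Sum>i\<in>{1..D}. 2 * i * (b i + 2))"
      unfolding sum.distrib[symmetric] by (rule sum.cong) (auto simp: algebra_simps)
    then show ?thesis by simp
  qed
  ultimately show ?thesis by (simp add: a3_form_def sum_mset_sum)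
qed

lemma h_map_f_form:
  fixes a :: "nat \<Rightarrow> nat"
  assumes a2: "\<And>i. i \<in> {1..D} \<Longrightarrow> 2 \<le> a i" and P: "distinct_parts_ge (2 * D + 2) P"
  shows "h_map ((\<Sum>i\<in>{1..D}. replicate_mset (a i) (2 * i)) + P) = a3_form D (\<lambda>i. a i - 2) P"
proof -
  let ?mu = "(\<Sum>i\<in>{1..D}. replicate_mset (a i) (2 * i)) + P"
  have cmu: "count ?mu x = (if even x \<and> 2 \<le> x \<and> x \<le> 2 * D then a (x div 2) else 0) + count P x" for x
    by (simp only: count_union count_even_blocks)
  have small: "count P x = 0" if "x \<le> 2 * D" for x using distinct_parts_ge_count_below[OF P] that by simp
  have repeated: "{j. 2 \<le> count ?mu j} = {j. even j \<and> 2 \<le> j \<and> j \<le> 2 * D}"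
  proof (rule set_eqI)
    fix j
    show "j \<in> {j. 2 \<le> count ?mu j} \<longleftrightarrow> j \<in> {j. even j \<and> 2 \<le> j \<and> j \<le> 2 * D}"
    proof (cases "even j \<and> 2 \<le> j \<and> j \<le> 2 * D")
      case True
      then have "2 \<le> a (j div 2)" by (intro a2) auto
      then show ?thesis using True cmu[of j] by simp
    next
      case False
      moreover have "count P j \<le> 1" using P by (simp add: distinct_parts_ge_def)
      ultimately show ?thesis using cmu[of j] by (simp only: if_False) simp
    qed
  qed
  have R1: "R1 ?mu = 2 * D"
  proof (cases "D = 0")
    case True
    then show ?thesis unfolding R1_def repeated by auto
  next
    case False
    have ne: "{j::nat. even j \<and> 2 \<le> j \<and> j \<le> 2 * D} \<noteq> {}"
      using False by (auto intro!: exI[of _ "2 * D"])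
    show ?thesis
      unfolding R1_def repeated if_not_P[OF ne]
      by (rule Max_eqI) (use False in \<open>auto intro: finite_subset[of _ "{..2 * D}"]\<close>)
  qed
  have "filter_mset (\<lambda>x. 2 * D < x) ?mu = P"
    by (rule multiset_eqI) (use cmu small in auto)
  moreover have "filter_mset (\<lambda>x. x \<le> 2 * D) ?mu - (\<Sum>i\<in>{1..D}. replicate_mset 2 (2 * i))
      = (\<Sum>i\<in>{1..D}. replicate_mset (a i - 2) (2 * i))"
    by (rule multiset_eqI)
      (unfold count_diff count_filter_mset cmu count_even_blocks, use small in auto)
  ultimately show ?thesis
    unfolding h_map_def R1 a3_form_def by simp
qed

section \<open>Realising prescribed data\<close>

definition has_f_data :: "nat multiset \<Rightarrow> nat \<Rightarrow> (nat \<Rightarrow> nat) \<Rightarrow> nat multiset \<Rightarrow> bool" where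
  "has_f_data q D a P \<longleftrightarrow> Dnum q = D \<and> (\<forall>i\<in>{1..D}. block_mult q i = a i) \<and> shifted_pieces q = P"

lemma has_f_data_cong:
  "has_f_data q D a P \<Longrightarrow> (\<And>i. i \<in> {1..D} \<Longrightarrow> a i = a' i) \<Longrightarrow> has_f_data q D a' P"
  by (simp add: has_f_data_def)

lemma has_f_data_grow0:
  assumes "q \<in> G1" "has_f_data q D a P"
  shows "has_f_data (grow0 q) D (\<lambda>i. a i + (if i = D then 1 else 0)) (image_mset Suc P)"
  using f_data_grow0_G1[OF assms(1)] assms(2) by (auto simp: has_f_data_def)

lemma has_f_data_grow1:
  assumes "q \<in> G1" "has_f_data q D a P"
  shows "has_f_data (grow1 q) D a (add_mset (2 * D + 2) (image_mset Suc P))"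
  using f_data_grow1[OF G1_parts_ge2[OF assms(1)]] assms(2) by (simp add: has_f_data_def)

lemma has_f_data_grow2:
  assumes "q \<in> G1" "has_f_data q D a P"
  shows "has_f_data (grow2 q) (Suc D) (a(Suc D := 2)) (image_mset (\<lambda>x. x + 2) P)"
  using f_data_grow2[OF G1_parts_ge2[OF assms(1)]] assms(2) by (auto simp: has_f_data_def le_Suc_eq)

lemma f_data_surj:
  "distinct_parts_ge (2 * D + 2) P \<Longrightarrow> \<exists>q\<in>G1. has_f_data q D (\<lambda>i. b i + 2) P"
proof (induction "D + (\<Sum>i\<in>{1..D}. b i) + sum_mset P" arbitrary: D b P rule: less_induct)
  case (less D b P)
  consider (grow2) D' where "D = Suc D'" "b D = 0" | (grow1) "D = 0 \<or> b D \<noteq> 0" "2 * D + 2 \<in># P"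
    | (empty) "D = 0" "P = {#}" | (grow0) "D = 0 \<or> b D \<noteq> 0" "2 * D + 2 \<notin># P" "D \<noteq> 0 \<or> P \<noteq> {#}"
    by (cases D) auto
  then show ?case
  proof cases
    case grow2
    have "distinct_parts_ge (2 * D' + 2 + 2) P" using less.prems grow2(1) by (simp add: add.assoc)
    then obtain P' where P': "P = image_mset (\<lambda>x. x + 2) P'" "distinct_parts_ge (2 * D' + 2) P'"
      by (rule distinct_parts_ge_shift_down)
    have "sum_mset P = sum_mset P' + 2 * size P'" unfolding P'(1) by (rule sum_mset_image_add)
    then obtain q where q: "q \<in> G1" "has_f_data q D' (\<lambda>i. b i + 2) P'"
      using less.hyps[of D' b P'] grow2 P'(2) by auto
    from has_f_data_grow2[OF q] have "has_f_data (grow2 q) D (\<lambda>i. b i + 2) P"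
      unfolding grow2(1) P'(1) by (rule has_f_data_cong) (use grow2 in auto)
    then show ?thesis using grow2_in_G1[OF q(1)] by blast
  next
    case grow1
    obtain P0 where P0: "P = add_mset (2 * D + 2) P0" using grow1(2) by (metis insert_DiffM)
    then have "distinct_parts_ge (2 * D + 2 + 1) P0"
      using less.prems distinct_parts_ge_add_mset by simp
    then obtain P' where "P0 = image_mset (\<lambda>x. x + 1) P'" "distinct_parts_ge (2 * D + 2) P'"
      by (rule distinct_parts_ge_shift_down)
    then have P': "P0 = image_mset Suc P'" "distinct_parts_ge (2 * D + 2) P'" by simp_all
    then obtain q where q: "q \<in> G1" "has_f_data q D (\<lambda>i. b i + 2) P'"
      using less.hyps[of D b P'] P0 by (auto simp: sum_mset_image_Suc)
    then have "count q 2 \<le> 1" using grow1(1) f_invariantD(4)[OF q(1)] by (auto simp: has_f_data_def)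
    then show ?thesis using has_f_data_grow1 grow1_in_G1 q P0 P'(1) by blast
  next
    case empty
    have "{#} \<in> G1" by (simp add: G1_def is_partition_def)
    moreover have "has_f_data {#} D (\<lambda>i. b i + 2) P" using empty by (simp add: has_f_data_def f_data_empty)
    ultimately show ?thesis by blast
  next
    case grow0
    then have "distinct_parts_ge (2 * D + 2 + 1) P" using less.prems distinct_parts_ge_Suc by simp
    then obtain P' where "P = image_mset (\<lambda>x. x + 1) P'" "distinct_parts_ge (2 * D + 2) P'"
      by (rule distinct_parts_ge_shift_down)
    then have P': "P = image_mset Suc P'" "distinct_parts_ge (2 * D + 2) P'" by simp_all
    define b' where "b' = b(D := b D - 1)"
    have "(\<Sum>i\<in>{1..D}. b' i) + sum_mset P' < (\<Sum>i\<in>{1..D}. b i) + sum_mset P"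
    proof (cases "D = 0")
      case True
      then show ?thesis using grow0(3) P'(1) by (simp add: sum_mset_image_Suc nonempty_has_size)
    next
      case False
      have "(\<Sum>i\<in>{1..D}. b' i) < (\<Sum>i\<in>{1..D}. b i)"
        by (rule sum_strict_mono_ex1) (use False grow0(1) in \<open>auto simp: b'_def\<close>)
      then show ?thesis using P'(1) by (simp add: sum_mset_image_Suc)
    qed
    then obtain q where q: "q \<in> G1" "has_f_data q D (\<lambda>i. b' i + 2) P'"
      using less.hyps[of D b' P'] P'(2) by auto
    have "has_f_data (grow0 q) D (\<lambda>i. b' i + 2 + (if i = D then 1 else 0)) (image_mset Suc P')"
      using has_f_data_grow0[OF q] by simp
    then have "has_f_data (grow0 q) D (\<lambda>i. b i + 2) P"
      unfolding P'(1) by (rule has_f_data_cong) (use grow0(1) in \<open>auto simp: b'_def\<close>)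
    then show ?thesis using grow0_in_G1[OF q(1)] by blast
  qed
qed

lemma h_map_f_map:
  assumes "q \<in> G1"
  shows "h_map (f_map q) = a3_form (Dnum q) (\<lambda>i. block_mult q i - 2) (shifted_pieces q)"
  unfolding f_map_eq using f_invariantD(1,2)[OF assms] by (rule h_map_f_form)

lemma bij_betw_h_map_f_map: "bij_betw (h_map \<circ> f_map) G1 A3"
proof (rule bij_betw_imageI)
  show "inj_on (h_map \<circ> f_map) G1"
  proof (rule inj_onI)
    fix q1 q2 assume q1: "q1 \<in> G1" and q2: "q2 \<in> G1" and eq: "(h_map \<circ> f_map) q1 = (h_map \<circ> f_map) q2"
    note inj = a3_form_inj[OF f_invariantD(2)[OF q1] f_invariantD(2)[OF q2]
        eq[unfolded comp_def h_map_f_map[OF q1] h_map_f_map[OF q2]]]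
    have "block_mult q1 i = block_mult q2 i" if "i \<in> {1..Dnum q1}" for i
      using inj(2)[OF that] f_invariantD(1)[OF q1 that] f_invariantD(1)[OF q2, of i] that inj(1) by simp
    then show "q1 = q2" using f_data_inj[OF q1 q2 inj(1) _ inj(3)] by blast
  qed
  show "(h_map \<circ> f_map) ` G1 = A3"
  proof
    show "(h_map \<circ> f_map) ` G1 \<subseteq> A3"
      using h_map_f_map a3_form_in_A3 f_invariantD(2) by auto
    show "A3 \<subseteq> (h_map \<circ> f_map) ` G1"
    proof
      fix l assume "l \<in> A3"
      then obtain D b P where P: "distinct_parts_ge (2 * D + 2) P" and l: "l = a3_form D b P"
        by (rule A3_eq_a3_form)
      obtain q where q: "q \<in> G1" "has_f_data q D (\<lambda>i. b i + 2) P" using f_data_surj[OF P] by blast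
      have "h_map (f_map q) = a3_form D (\<lambda>i. block_mult q i - 2) P"
        using h_map_f_map[OF q(1)] q(2) by (simp add: has_f_data_def)
      also have "\<dots> = l" unfolding l by (rule a3_form_cong) (use q(2) in \<open>simp add: has_f_data_def\<close>)
      finally show "l \<in> (h_map \<circ> f_map) ` G1" using q(1) by force
    qed
  qed
qed

lemma sum_mset_h_map_f_map:
  assumes q: "q \<in> G1"
  shows "sum_mset (h_map (f_map q)) + size q = sum_mset q"
proof -
  let ?D = "Dnum q" and ?P = "shifted_pieces q"
  have "(\<Sum>i\<in>{1..?D}. 2 * i * (block_mult q i - 2 + 2)) = (\<Sum>i\<in>{1..?D}. 2 * i * block_mult q i)"
  proof (rule sum.cong)
    fix i assume "i \<in> {1..?D}"
    then have "2 \<le> block_mult q i" by (rule f_invariantD(1)[OF q])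
    then show "2 * i * (block_mult q i - 2 + 2) = 2 * i * block_mult q i"
      by (simp only: le_add_diff_inverse2)
  qed simp
  then have "sum_mset (h_map (f_map q)) + size ?P + 2 * ?D = sum_mset (f_map q)"
    using sum_mset_a3_form[OF f_invariantD(2)[OF q]] by (simp add: h_map_f_map[OF q] sum_mset_f_map)
  then show ?thesis using f_invariantD(3,5)[OF q] by simp
qed

lemma G3_adjacent: "p \<in> G3 \<Longrightarrow> count p j + count p (Suc j) \<le> 2"
  by (cases j) (auto simp: G3_def is_partition_def not_in_iff)

lemma bij_betw_g_map: "bij_betw g_map G3 G1"
proof (rule bij_betw_imageI)
  show "inj_on g_map G3" unfolding g_map_def using multiset.inj_map[OF inj_Suc] by (rule inj_on_subset) simp
  show "g_map ` G3 = G1"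
  proof
    show "g_map ` G3 \<subseteq> G1"
    proof
      fix q assume "q \<in> g_map ` G3"
      then obtain p where p: "p \<in> G3" "q = grow0 p" by (auto simp: g_map_def grow0_def)
      have "count p (j - 1) + count p j \<le> 2" if "1 \<le> j" for j
        using G3_adjacent[OF p(1), of "j - 1"] that by simp
      then show "q \<in> G1" using p by (auto simp: G1_iff count_grow0 G3_def is_partition_def count_eq_zero_iff)
    qed
    show "G1 \<subseteq> g_map ` G3"
    proof
      fix q assume q: "q \<in> G1"
      then have "\<forall>x\<in>#q. 1 \<le> x" using G1_parts_ge2 by fastforce
      then obtain p where p: "q = image_mset (\<lambda>x. x + 1) p" "\<And>j. count p j = count q (j + 1)"
        using obtain_image_mset_add by blast
      have "p \<in> G3"
        using q G1_adjacent[OF q] G1_count_two[OF q]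
        by (auto simp: G3_def G1_iff is_partition_def p(2) numeral_2_eq_2 simp flip: count_eq_zero_iff)
      moreover have "q = g_map p" by (simp add: p(1) g_map_def)
      ultimately show "q \<in> g_map ` G3" by blast
    qed
  qed
qed

theorem mainTheorem4:
  shows "bij_betw fbar G3 A3 \<and> (\<forall>p\<in>G3. sum_mset (fbar p) = sum_mset p)"
proof (intro conjI ballI)
  show "bij_betw fbar G3 A3"
    unfolding fbar_def by (rule bij_betw_trans[OF bij_betw_g_map bij_betw_h_map_f_map])
  fix p assume "p \<in> G3"
  then have "g_map p \<in> G1" using bij_betw_g_map by (auto dest: bij_betw_apply)
  from sum_mset_h_map_f_map[OF this] show "sum_mset (fbar p) = sum_mset p"
    by (simp add: fbar_def g_map_def sum_mset_image_Suc)
qed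

end
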